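(* Assume $\mathscr{R}_0>\frac{\sigma_m(\mu+r)C_I}{\mu\beta}$ (equivalently $C_I<\frac{\beta A}{(\mu+r)(\mu+\beta+\rho)}$) and $$C_I\le\frac{\mu^2}{\mu+r}\left(\sqrt{\frac{\beta}{\mu\sigma_m}+\frac{1}{\sigma_s}}-\sqrt{\frac{1}{\sigma_s}}\right)^2.$$ Then, with $K=1+\frac{\sigma_m(\mu+r)}{\mu\beta}C_I$: if $(\sqrt p+\sqrt q)^2\le\mathscr{R}_0\le1$, $E^*$ is not an endemic equilibrium but $E_1^*$ and $E_2^*$ are; if $1<\mathscr{R}_0<K$, all of $E^*,E_1^*,E_2^*$ are endemic equilibria; if $\mathscr{R}_0=K$, $E^*$ and $E_1^*$ are endemic equilibria but $E_2^*$ is not; if $\mathscr{R}_0>K$, $E_1^*$ is the unique endemic equilibrium.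
   Context: Let $A,\sigma_m,\sigma_s,\mu,\rho,\beta,r,C_I$ be positive constants. Write $[x]^+=\max\{0,x\}$ and $T(I_s)=rI_s$ if $I_s<C_I$, $T(I_s)=rC_I$ if $I_s\ge C_I$. System (3) is $$S'=A-\sigma_mSI_m-\sigma_sS[I_s-C_I]^+-\mu S,\quad I_m'=\sigma_mSI_m+\sigma_sS[I_s-C_I]^+-(\mu+\rho+\beta)I_m,\quad I_s'=\beta I_m-T(I_s)-\mu I_s.$$ $\mathscr{R}_0=\frac{A\sigma_m}{\mu(\mu+\beta+\rho)}$. An endemic equilibrium is an equilibrium of (3) with $S,I_m,I_s>0$. $E^*=(S^*,I_m^*,I_s^* )$ with $S^*=\frac{\mu+\beta+\rho}{\sigma_m}$, $I_m^*=\frac{\mu(\mathscr{R}_0-1)}{\sigma_m}$, $I_s^*=\frac{\mu\beta(\mathscr{R}_0-1)}{\sigma_m(\mu+r)}$. Let $p=\frac{(\mu+r)\sigma_m\sigma_sC_I}{\mu(\mu\sigma_m+\beta\sigma_s)}$, $q=\frac{\mu\sigma_m}{\mu\sigma_m+\beta\sigma_s}$, and $S_{1,2}^*=\frac{\mu+\beta+\rho}{2\sigma_m}\big\{\mathscr{R}_0-p+q\mp\sqrt{(\mathscr{R}_0-p-q)^2-4pq}\big\}$ (minus sign for $S_1^*$, plus for $S_2^*$), $I_{m_i}^*=\frac{\mu\mathscr{R}_0}{\sigma_m}-\frac{\mu S_i^*}{\mu+\beta+\rho}$, $I_{s_i}^*=\frac{\beta\mathscr{R}_0}{\sigma_m}-\frac{\beta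 S_i^*}{\mu+\beta+\rho}-\frac{rC_I}{\mu}$, $E_i^*=(S_i^*,I_{m_i}^*,I_{s_i}^* )$, $i=1,2$. "$E_i^*$ exists" / "$E_i^*$ is an endemic equilibrium" means $S_i^*$ is real, $S_i^*>0$, $I_{m_i}^*>0$ and $I_{s_i}^*>C_I$; "$E^*$ exists" means $E^*$ is an endemic equilibrium. *)

theory Defs
  imports Complex_Main
begin

text \<open>Parameters are always passed in the order A sm ss mu rho beta r CI
 (for A, sigma_m, sigma_s, mu, rho, beta, r, C_I).\<close>

definition pos_part :: "real \<Rightarrow> real" where
  "pos_part x = max 0 x"

definition Tfun :: "real \<Rightarrow> real \<Rightarrow> real \<Rightarrow> real" where
  "Tfun r CI Ys = (if Ys < CI then r * Ys else r * CI)"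

definition rhsS :: "real \<Rightarrow> real \<Rightarrow> real \<Rightarrow> real \<Rightarrow> real \<Rightarrow> real \<Rightarrow> real \<Rightarrow> real \<Rightarrow> real \<times> real \<times> real \<Rightarrow> real" where
  "rhsS A sm ss mu rho beta r CI E = (case E of (S, Ym, Ys) \<Rightarrow>
     A - sm * S * Ym - ss * S * pos_part (Ys - CI) - mu * S)"

definition rhsIm :: "real \<Rightarrow> real \<Rightarrow> real \<Rightarrow> real \<Rightarrow> real \<Rightarrow> real \<Rightarrow> real \<Rightarrow> real \<Rightarrow> real \<times> real \<times> real \<Rightarrow> real" where
  "rhsIm A sm ss mu rho beta r CI E = (case E of (S, Ym, Ys) \<Rightarrow>
     sm * S * Ym + ss * S * pos_part (Ys - CI) - (mu + rho + beta) * Ym)"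

definition rhsIs :: "real \<Rightarrow> real \<Rightarrow> real \<Rightarrow> real \<Rightarrow> real \<Rightarrow> real \<Rightarrow> real \<Rightarrow> real \<Rightarrow> real \<times> real \<times> real \<Rightarrow> real" where
  "rhsIs A sm ss mu rho beta r CI E = (case E of (S, Ym, Ys) \<Rightarrow>
     beta * Ym - Tfun r CI Ys - mu * Ys)"

definition endemic_eq :: "real \<Rightarrow> real \<Rightarrow> real \<Rightarrow> real \<Rightarrow> real \<Rightarrow> real \<Rightarrow> real \<Rightarrow> real \<Rightarrow> real \<times> real \<times> real \<Rightarrow> bool" where
  "endemic_eq A sm ss mu rho beta r CI E = (case E of (S, Ym, Ys) \<Rightarrow>
     S > 0 \<and> Ym > 0 \<and> Ys > 0 \<and>
     rhsS A sm ss mu rho beta r CI E = 0 \<and>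
     rhsIm A sm ss mu rho beta r CI E = 0 \<and>
     rhsIs A sm ss mu rho beta r CI E = 0)"

definition R0 :: "real \<Rightarrow> real \<Rightarrow> real \<Rightarrow> real \<Rightarrow> real \<Rightarrow> real \<Rightarrow> real" where
  "R0 A sm mu rho beta r = A * sm / (mu * (mu + beta + rho))"

definition Estar :: "real \<Rightarrow> real \<Rightarrow> real \<Rightarrow> real \<Rightarrow> real \<Rightarrow> real \<Rightarrow> real \<Rightarrow> real \<Rightarrow> real \<times> real \<times> real" where
  "Estar A sm ss mu rho beta r CI =
     (let R = R0 A sm mu rho beta r in
      ((mu + beta + rho) / sm,
       mu * (R - 1) / sm,
       mu * beta * (R - 1) / (sm * (mu + r))))"

definition pp :: "real \<Rightarrow> real \<Rightarrow> real \<Rightarrow> real \<Rightarrow> real \<Rightarrow> real \<Rightarrow> real \<Rightarrow> real \<Rightarrow> real" where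
  "pp A sm ss mu rho beta r CI = (mu + r) * sm * ss * CI / (mu * (mu * sm + beta * ss))"

definition qq :: "real \<Rightarrow> real \<Rightarrow> real \<Rightarrow> real \<Rightarrow> real \<Rightarrow> real \<Rightarrow> real \<Rightarrow> real \<Rightarrow> real" where
  "qq A sm ss mu rho beta r CI = mu * sm / (mu * sm + beta * ss)"

definition discr :: "real \<Rightarrow> real \<Rightarrow> real \<Rightarrow> real \<Rightarrow> real \<Rightarrow> real \<Rightarrow> real \<Rightarrow> real \<Rightarrow> real" where
  "discr A sm ss mu rho beta r CI =
     (let R = R0 A sm mu rho beta r; p = pp A sm ss mu rho beta r CI;
          q = qq A sm ss mu rho beta r CI in (R - p - q)^2 - 4 * p * q)"

text \<open>S_i^* with sign s = -1 for i = 1 and s = 1 for i = 2.\<close>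
definition Si :: "real \<Rightarrow> real \<Rightarrow> real \<Rightarrow> real \<Rightarrow> real \<Rightarrow> real \<Rightarrow> real \<Rightarrow> real \<Rightarrow> real \<Rightarrow> real" where
  "Si s A sm ss mu rho beta r CI =
     (let R = R0 A sm mu rho beta r; p = pp A sm ss mu rho beta r CI;
          q = qq A sm ss mu rho beta r CI in
      (mu + beta + rho) / (2 * sm) * (R - p + q + s * sqrt (discr A sm ss mu rho beta r CI)))"

definition Ei :: "real \<Rightarrow> real \<Rightarrow> real \<Rightarrow> real \<Rightarrow> real \<Rightarrow> real \<Rightarrow> real \<Rightarrow> real \<Rightarrow> real \<Rightarrow> real \<times> real \<times> real" where
  "Ei s A sm ss mu rho beta r CI =
     (let R = R0 A sm mu rho beta r; S = Si s A sm ss mu rho beta r CI in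
      (S, mu * R / sm - mu * S / (mu + beta + rho),
          beta * R / sm - beta * S / (mu + beta + rho) - r * CI / mu))"

definition Ei_exists :: "real \<Rightarrow> real \<Rightarrow> real \<Rightarrow> real \<Rightarrow> real \<Rightarrow> real \<Rightarrow> real \<Rightarrow> real \<Rightarrow> real \<Rightarrow> bool" where
  "Ei_exists s A sm ss mu rho beta r CI =
     (discr A sm ss mu rho beta r CI \<ge> 0 \<and>
      (case Ei s A sm ss mu rho beta r CI of (S, Ym, Ys) \<Rightarrow> S > 0 \<and> Ym > 0 \<and> Ys > CI))"

end

theory Submission
  imports Defs
begin

(* Rescale the susceptible level as x = sigma_m S / (mu + beta + rho). An equilibrium with
   I_s <= C_I forces x = 1, i.e. it is E^*, and this is consistent exactly when
   1 < R_0 <= K = 1 + k. An equilibrium with I_s > C_I is determined by a root x of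
   f(x) = x^2 - (R_0 - p + q) x + R_0 q with 0 < x < R_0 - k, and its roots are S_1^*, S_2^*
   in these units. Since p = k (1 - q), one has 4 f(R_0 - k) = 4 k q (K - R_0), so R_0 - k
   separates the two roots when R_0 > K and lies above both when R_0 < K. The bound on C_I
   is equivalent to sqrt p + sqrt q <= 1, which gives k q < 1 - q: both roots are then
   positive, and for R_0 = K the larger root sits exactly at R_0 - k. *)

lemma discr_eq_shifted: "((R::real) - p - q)^2 - 4*p*q = (R - p + q)^2 - 4*R*q"
  by (simp add: power2_eq_square algebra_simps)

lemma quadratic_at_gap:
  fixes R p q k :: real
  assumes "p = k*(1-q)"
  shows "(2*(R-k) - (R-p+q))^2 - ((R-p+q)^2 - 4*R*q) = 4*k*q*(1+k-R)"
  unfolding assms by (simp add: power2_eq_square algebra_simps)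

lemma mult_less_one_minus_if_sqrt_add_le_one:
  fixes p q k :: real
  assumes q: "0 < q" "q < 1" and "0 < k" and pk: "p = k*(1-q)" and hs: "sqrt p + sqrt q \<le> 1"
  shows "k*q < 1 - q"
proof -
  have p0: "p \<ge> 0" using pk q \<open>0 < k\<close> by simp
  have sq1: "sqrt q < 1" and sqsq: "sqrt q * sqrt q = q" using q by auto
  have sqq: "q \<le> sqrt q"
    using sq1 q mult_left_mono[of "sqrt q" 1 "sqrt q"] sqsq by simp
  have "p = sqrt p ^ 2" using p0 by simp
  also have "\<dots> \<le> (1 - sqrt q)^2" using hs p0 by (intro power_mono) auto
  finally have "p*q \<le> (1 - sqrt q)^2 * q" using q by (simp add: mult_right_mono)
  also have "\<dots> = (sqrt q - q)^2"
    using sqsq by (simp add: power2_eq_square algebra_simps)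
  also have "\<dots> < (1 - q)^2" using sqq sq1 by (intro power_strict_mono) auto
  finally have "k*q*(1-q) < (1-q)*(1-q)" using pk by (simp add: power2_eq_square algebra_simps)
  then show ?thesis using q by simp
qed

lemma roots_below_gap:
  fixes R p q k :: real
  assumes q: "0 < q" "q < 1" and k: "0 < k" and pk: "p = k*(1-q)" and hs: "sqrt p + sqrt q \<le> 1"
    and hR: "(sqrt p + sqrt q)^2 \<le> R" and hRK: "R < 1 + k"
  defines "d \<equiv> (R-p-q)^2 - 4*p*q"
  shows "d \<ge> 0 \<and> 0 < (R-p+q - sqrt d)/2 \<and> (R-p+q + sqrt d)/2 < R-k"
proof -
  have p0: "p > 0" using pk q k by simp
  have "(sqrt p + sqrt q)^2 = p + q + 2*sqrt (p*q)"
    using p0 q by (simp add: power2_eq_square algebra_simps real_sqrt_mult)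
  then have h1: "R - p - q \<ge> 2*sqrt (p*q)" using hR by simp
  have sq0: "sqrt (p*q) \<ge> 0" using p0 q by simp
  have "(2*sqrt (p*q))^2 \<le> (R-p-q)^2" using h1 sq0 by (intro power_mono) auto
  then have d0: "d \<ge> 0" using p0 q by (simp add: d_def power2_eq_square)
  define s where "s = R-p+q"
  define m where "m = 2*(R-k) - s"
  have dsg: "d = s^2 - 4*R*q" unfolding d_def s_def by (rule discr_eq_shifted)
  have "R > 0" "s > 0" using h1 sq0 p0 q unfolding s_def by linarith+
  then have "(sqrt d)^2 < s^2" using d0 dsg q by simp
  then have "sqrt d < s" using \<open>s > 0\<close> power2_less_imp_less[of "sqrt d" s] by simp
  moreover have "sqrt d < m"
  proof (rule power2_less_imp_less)
    have "(k*q)^2 < k*q*(1-q)"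
      using mult_strict_left_mono[OF mult_less_one_minus_if_sqrt_add_le_one[OF q k pk hs], of "k*q"] k q
      by (simp add: power2_eq_square)
    then have "(k*q)^2 < p*q" unfolding pk by (simp add: algebra_simps)
    then have "k*q < sqrt (p*q)" by (rule real_less_rsqrt)
    then show "0 \<le> m" using h1 pk by (simp add: m_def s_def algebra_simps)
    have "m^2 - d = 4*k*q*(1+k-R)"
      using quadratic_at_gap[OF pk, of R] dsg by (simp add: m_def s_def)
    moreover have "4*k*q*(1+k-R) > 0" using k q hRK by simp
    ultimately show "(sqrt d)^2 < m^2" using d0 by simp
  qed
  ultimately show ?thesis using d0 by (simp add: m_def s_def)
qed

lemma roots_at_gap:
  fixes R p q k :: real
  assumes "k*q < 1 - q" and pk: "p = k*(1-q)" and hRK: "R = 1 + k"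
  defines "d \<equiv> (R-p-q)^2 - 4*p*q"
  shows "d \<ge> 0 \<and> (R-p+q - sqrt d)/2 = (1+k)*q \<and> (R-p+q + sqrt d)/2 = 1"
proof -
  have "d = (1 - (1+k)*q)^2" unfolding d_def pk hRK by (simp add: power2_eq_square algebra_simps)
  moreover have "1 - (1+k)*q > 0" using assms(1) by (simp add: algebra_simps)
  ultimately have "sqrt d = 1 - (1+k)*q" and "d \<ge> 0" by simp_all
  moreover have "R-p+q = 1 + (1+k)*q" unfolding pk hRK by (simp add: algebra_simps)
  ultimately show ?thesis by simp
qed

lemma unique_root_below_gap:
  fixes R p q k :: real
  assumes q: "0 < q" "q < 1" and k: "0 < k" and pk: "p = k*(1-q)" and hRK: "R > 1 + k"
  defines "d \<equiv> (R-p-q)^2 - 4*p*q"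
  shows "d \<ge> 0 \<and> 0 < (R-p+q - sqrt d)/2 \<and> (R-p+q - sqrt d)/2 < R-k \<and>
    (\<forall>x. x^2 - (R-p+q)*x + R*q = 0 \<longrightarrow> x < R-k \<longrightarrow> x = (R-p+q - sqrt d)/2)"
proof -
  define s where "s = R-p+q"
  define m where "m = 2*(R-k) - s"
  have dsg: "d = s^2 - 4*R*q" unfolding d_def s_def by (rule discr_eq_shifted)
  have "m^2 - d = 4*k*q*(1+k-R)" using quadratic_at_gap[OF pk, of R] dsg by (simp add: m_def s_def)
  also have "\<dots> < 0" using k q hRK by (simp add: mult_pos_neg)
  finally have md: "m^2 < d" by simp
  then have d0: "d \<ge> 0" using zero_le_power2[of m] by linarith
  have mt: "\<bar>m\<bar> < sqrt d" using md d0 power2_less_imp_less[of "\<bar>m\<bar>" "sqrt d"] by simp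
  have s0: "s > 0" unfolding s_def pk using hRK q k
    by (smt (verit) mult_less_cancel_left1 mult_pos_pos)
  have "R*q > 0" using hRK k q by simp
  then have st: "sqrt d < s" using d0 dsg s0 power2_less_imp_less[of "sqrt d" s] by simp
  have "x = (s - sqrt d)/2" if "x^2 - s*x + R*q = 0" "x < R-k" for x
  proof -
    have "(2*x - s)^2 = (sqrt d)^2" using that(1) d0 dsg by (simp add: power2_eq_square algebra_simps)
    then have "2*x - s = sqrt d \<or> 2*x - s = - sqrt d" by (simp add: power2_eq_iff)
    moreover have "2*x - s < m" using that(2) by (simp add: m_def)
    then have "2*x - s < sqrt d" using mt abs_ge_self[of m] by linarith
    ultimately show ?thesis by auto
  qed
  then show ?thesis using d0 st mt unfolding s_def[symmetric] m_def by auto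
qed

locale mild_severe_model =
  fixes A sm ss mu rho beta r CI :: real
  assumes pos: "A > 0" "sm > 0" "ss > 0" "mu > 0" "rho > 0" "beta > 0" "r > 0" "CI > 0"
begin

abbreviation "R \<equiv> R0 A sm mu rho beta r"
abbreviation "p \<equiv> pp A sm ss mu rho beta r CI"
abbreviation "q \<equiv> qq A sm ss mu rho beta r CI"
abbreviation "d \<equiv> discr A sm ss mu rho beta r CI"

definition N :: real where "N = mu + beta + rho"
definition k :: real where "k = sm * (mu + r) * CI / (mu * beta)"
definition D :: real where "D = mu * sm + beta * ss"

text \<open>The candidate equilibrium with S = N x / sm whose I_m and I_s solve the S- and
  I_s-equations when treatment runs at capacity.\<close>
definition branch :: "real \<Rightarrow> real \<times> real \<times> real" where
  "branch x = (N*x/sm, mu*(R - x)/sm, beta*(R - x)/sm - r*CI/mu)"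

lemma endemic_eq_iff:
  "endemic_eq A sm ss mu rho beta r CI (S, Y, Z) \<longleftrightarrow> S > 0 \<and> Y > 0 \<and> Z > 0 \<and>
     A - sm*S*Y - ss*S*pos_part (Z - CI) - mu*S = 0 \<and>
     sm*S*Y + ss*S*pos_part (Z - CI) - N*Y = 0 \<and>
     beta*Y - Tfun r CI Z - mu*Z = 0"
  by (simp add: endemic_eq_def rhsS_def rhsIm_def rhsIs_def N_def add_ac)

lemma N_pos: "N > 0" and k_pos: "k > 0" and D_pos: "D > 0"
  using pos by (simp_all add: N_def k_def D_def add_pos_pos)

lemma q_eq: "q = mu*sm/D" and p_eq: "p = (mu + r)*sm*ss*CI/(mu*D)"
  by (simp_all add: qq_def pp_def D_def)

lemma q_pos: "q > 0" and q_less_one: "q < 1"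
  using pos D_pos by (simp_all add: q_eq D_def)

lemma p_eq_k: "p = k*(1 - q)"
proof -
  have "1 - q = beta*ss/D" using D_pos by (simp add: q_eq D_def field_simps)
  then show ?thesis using pos D_pos by (simp add: p_eq k_def)
qed

lemma d_eq: "d = (R-p-q)^2 - 4*p*q"
  by (simp add: discr_def Let_def)

lemma R_eq: "R = A*sm/(mu*N)"
  by (simp add: R0_def N_def)

lemma branch_capacity_gap: "beta*(R - x)/sm - r*CI/mu - CI = beta/sm*(R - x - k)"
  using pos by (simp add: k_def field_simps)

lemma Ei_eq_branch: "Ei s A sm ss mu rho beta r CI = branch ((R - p + q + s*sqrt d)/2)"
proof -
  define x where "x = (R - p + q + s*sqrt d)/2"
  have "Si s A sm ss mu rho beta r CI = N*x/sm" by (simp add: Si_def Let_def N_def x_def)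
  then show ?thesis
    using pos N_pos unfolding x_def[symmetric]
    by (simp add: Ei_def Let_def branch_def N_def[symmetric] diff_divide_distrib right_diff_distrib)
qed

lemma sqrt_p_add_sqrt_q_le_one:
  assumes hC: "CI \<le> mu^2 / (mu + r) * (sqrt (beta / (mu * sm) + 1 / ss) - sqrt (1 / ss))^2"
  shows "sqrt p + sqrt q \<le> 1"
proof -
  define a where "a = beta / (mu * sm) + 1 / ss"
  define b where "b = 1 / ss"
  define c where "c = sqrt (mu*sm*ss/D)"
  have "mu*sm*ss * a = D" using pos unfolding a_def by (simp add: D_def field_simps)
  then have "mu*sm*ss/D * a = 1" using D_pos by simp
  then have ca: "c * sqrt a = 1" unfolding c_def by (metis real_sqrt_mult real_sqrt_one)
  have "mu*sm*ss/D * b = q" using pos unfolding b_def by (simp add: q_eq)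
  then have cb: "c * sqrt b = sqrt q" unfolding c_def by (metis real_sqrt_mult)
  have "p = (mu + r) * sm * ss / (mu * D) * CI" by (simp add: p_eq)
  also have "\<dots> \<le> (mu + r) * sm * ss / (mu * D) * (mu^2 / (mu + r) * (sqrt a - sqrt b)^2)"
    using hC pos D_pos unfolding a_def b_def by (intro mult_left_mono) auto
  also have "\<dots> = c^2 * (sqrt a - sqrt b)^2"
    using pos D_pos by (simp add: c_def power2_eq_square)
  also have "\<dots> = (c * sqrt a - c * sqrt b)^2"
    by (simp add: power2_eq_square algebra_simps)
  finally have "sqrt p \<le> sqrt ((1 - sqrt q)^2)" using ca cb by (simp only: real_sqrt_le_iff)
  then show ?thesis using q_less_one by simp
qed

lemma Ei_exists_iff:
  "Ei_exists s A sm ss mu rho beta r CI \<longleftrightarrow>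
     d \<ge> 0 \<and> 0 < (R-p+q + s*sqrt d)/2 \<and> (R-p+q + s*sqrt d)/2 < R - k"
proof -
  define x where "x = (R-p+q + s*sqrt d)/2"
  have "beta*(R - x)/sm - r*CI/mu > CI \<longleftrightarrow> beta/sm*(R - x - k) > 0"
    using branch_capacity_gap[of x] by linarith
  also have "\<dots> \<longleftrightarrow> R - x - k > 0" using pos by (simp add: zero_less_mult_iff zero_less_divide_iff)
  also have "\<dots> \<longleftrightarrow> x < R - k" by linarith
  finally have "beta*(R - x)/sm - r*CI/mu > CI \<longleftrightarrow> x < R - k" .
  moreover have "N*x/sm > 0 \<longleftrightarrow> x > 0" using pos N_pos by (simp add: zero_less_mult_iff zero_less_divide_iff)
  moreover have "x < R - k \<Longrightarrow> mu*(R - x)/sm > 0" using pos k_pos by simp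
  ultimately show ?thesis
    unfolding Ei_exists_def Ei_eq_branch x_def[symmetric] branch_def by auto
qed

lemma Estar_eq: "Estar A sm ss mu rho beta r CI = (N/sm, mu*(R-1)/sm, mu*beta*(R-1)/(sm*(mu+r)))"
  by (simp add: Estar_def Let_def N_def)

lemma Estar_not_endemic: "R \<le> 1 \<Longrightarrow> \<not> endemic_eq A sm ss mu rho beta r CI (Estar A sm ss mu rho beta r CI)"
  using pos by (auto simp: Estar_eq endemic_eq_iff mult_le_0_iff divide_le_0_iff not_less)

lemma Estar_endemic:
  assumes R: "1 < R" "R \<le> 1 + k"
  shows "endemic_eq A sm ss mu rho beta r CI (Estar A sm ss mu rho beta r CI)"
proof -
  define Y where "Y = mu*(R-1)/sm"
  define Z where "Z = mu*beta*(R-1)/(sm*(mu+r))"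
  have "mu + r > 0" using pos by simp
  then have "Z - CI = mu*beta/(sm*(mu+r))*(R-1-k)" using pos by (simp add: Z_def k_def divide_simps)
  also have "\<dots> \<le> 0" using pos R by (intro mult_nonneg_nonpos) auto
  finally have "pos_part (Z - CI) = 0" and "Tfun r CI Z = r*Z"
    by (auto simp: pos_part_def Tfun_def)
  moreover have "beta*Y - r*Z - mu*Z = 0"
    using pos by (simp add: Y_def Z_def divide_simps) (simp add: algebra_simps)
  moreover have "A - sm*(N/sm)*Y - mu*(N/sm) = 0" using pos N_pos by (simp add: R_eq Y_def field_simps)
  moreover have "sm*(N/sm)*Y - (mu + rho + beta)*Y = 0" using pos by (simp add: N_def)
  moreover have "Y > 0" "Z > 0" using pos R by (simp_all add: Y_def Z_def)
  ultimately show ?thesis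
    using pos N_pos unfolding Estar_eq Y_def[symmetric] Z_def[symmetric] endemic_eq_iff by simp
qed

lemma p_mult_D: "p*D = k*beta*ss" and q_mult_D: "q*D = mu*sm"
  using pos D_pos by (simp_all add: p_eq q_eq k_def)

lemma Im_equation_on_branch:
  "sm*(N*x/sm)*(mu*(R - x)/sm) + ss*(N*x/sm)*(beta/sm*(R - x - k)) - N*(mu*(R - x)/sm)
     = - (N/sm^2) * (D*(x^2 - (R-p+q)*x + R*q))"
proof -
  have "D*(x^2 - (R-p+q)*x + R*q) = D*x^2 - (D*R - p*D + q*D)*x + R*(q*D)"
    by (simp add: algebra_simps power2_eq_square)
  also have "\<dots> = mu*sm*(R - x) - x*(mu*sm*(R - x) + ss*beta*(R - x - k))"
    by (simp only: p_mult_D q_mult_D) (simp add: D_def algebra_simps power2_eq_square)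
  finally have f: "D*(x^2 - (R-p+q)*x + R*q)
      = mu*sm*(R - x) - x*(mu*sm*(R - x) + ss*beta*(R - x - k))" .
  have "sm*(N*x/sm)*(mu*(R - x)/sm) + ss*(N*x/sm)*(beta/sm*(R - x - k)) - N*(mu*(R - x)/sm)
     = N/sm^2 * (x*(mu*sm*(R - x) + ss*beta*(R - x - k)) - mu*sm*(R - x))"
    using pos by (simp add: field_simps power2_eq_square)
  also have "\<dots> = - (N/sm^2) * (D*(x^2 - (R-p+q)*x + R*q))" unfolding f by (simp add: algebra_simps)
  finally show ?thesis .
qed

lemma endemic_below_capacity:
  assumes E: "endemic_eq A sm ss mu rho beta r CI (S, Y, Z)" and ZC: "Z \<le> CI"
  shows "R \<le> 1 + k"
proof -
  have "pos_part (Z - CI) = 0" and "Tfun r CI Z = r*Z" using ZC by (auto simp: pos_part_def Tfun_def)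
  with E have Y0: "Y > 0" and e1: "A - sm*S*Y - mu*S = 0" and e2: "sm*S*Y - N*Y = 0"
    and e3: "beta*Y - r*Z - mu*Z = 0"
    unfolding endemic_eq_iff by auto
  have SN: "S = N/sm" using e2 Y0 pos by (simp add: field_simps)
  then have "mu*S + N*Y = A" using e1 pos by simp
  then have R: "R = (mu*S + N*Y)*sm/(mu*N)" by (simp add: R_eq)
  have "Y = mu*(R - 1)/sm" unfolding R using SN pos N_pos by (simp add: field_simps)
  then have "beta*(mu*(R - 1)/sm) = (mu + r)*Z" using e3 by (simp add: algebra_simps)
  then have "beta*(mu*(R - 1)/sm) \<le> (mu + r)*CI" using ZC pos by simp
  then show ?thesis using pos by (simp add: k_def field_simps)
qed

lemma endemic_above_capacity:
  assumes E: "endemic_eq A sm ss mu rho beta r CI (S, Y, Z)" and ZC: "Z > CI"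
  obtains x where "0 < x" "x < R - k" "x^2 - (R-p+q)*x + R*q = 0" "(S, Y, Z) = branch x"
proof
  have "pos_part (Z - CI) = Z - CI" and "Tfun r CI Z = r*CI" using ZC by (auto simp: pos_part_def Tfun_def)
  with E have S0: "S > 0" and
    e1: "A - sm*S*Y - ss*S*(Z - CI) - mu*S = 0" and e2: "sm*S*Y + ss*S*(Z - CI) - N*Y = 0" and
    e3: "beta*Y - r*CI - mu*Z = 0"
    unfolding endemic_eq_iff by simp_all
  define x where "x = sm*S/N"
  have S: "S = N*x/sm" using pos N_pos by (simp add: x_def)
  have "mu*S + N*Y = A" using e1 e2 by simp
  then have R: "R = (mu*S + N*Y)*sm/(mu*N)" by (simp add: R_eq)
  have Y: "Y = mu*(R - x)/sm" unfolding R using pos N_pos by (simp add: x_def field_simps)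
  have "Z = beta*(R - x)/sm - r*CI/mu" using e3 pos by (simp add: Y field_simps)
  then show "(S, Y, Z) = branch x" by (simp add: branch_def S Y)
  then have "Z - CI = beta/sm*(R - x - k)" using branch_capacity_gap by (simp add: branch_def)
  then have "beta/sm*(R - x - k) > 0" using ZC by simp
  then have "R - x - k > 0" using pos by (simp add: zero_less_mult_iff zero_less_divide_iff)
  then show "x < R - k" by simp
  show "0 < x" using S0 pos N_pos by (simp add: x_def)
  show "x^2 - (R-p+q)*x + R*q = 0"
    using Im_equation_on_branch[of x] e2 pos N_pos D_pos unfolding S Y \<open>Z - CI = _\<close> by simp
qed

lemma endemic_branch:
  assumes x: "0 < x" "x < R - k" and root: "x^2 - (R-p+q)*x + R*q = 0"
  shows "endemic_eq A sm ss mu rho beta r CI (branch x)"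
proof -
  define S Y Z where "S = N*x/sm" and "Y = mu*(R - x)/sm" and "Z = beta*(R - x)/sm - r*CI/mu"
  have ZC: "Z - CI = beta/sm*(R - x - k)" using branch_capacity_gap by (simp add: Z_def)
  moreover have "beta/sm*(R - x - k) > 0" using x pos by simp
  ultimately have "Z > CI" by simp
  then have "pos_part (Z - CI) = Z - CI" and "Tfun r CI Z = r*CI" by (auto simp: pos_part_def Tfun_def)
  moreover have e2: "sm*S*Y + ss*S*(Z - CI) - N*Y = 0"
    using Im_equation_on_branch[of x] root unfolding S_def Y_def ZC by simp
  moreover have "A - mu*S - N*Y = 0" using pos N_pos by (simp add: S_def Y_def R_eq field_simps)
  moreover have "beta*Y - r*CI - mu*Z = 0" using pos by (simp add: Y_def Z_def field_simps)
  moreover have "S > 0" "Y > 0" using x pos N_pos k_pos by (simp_all add: S_def Y_def)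
  ultimately show ?thesis
    using \<open>Z > CI\<close> pos unfolding branch_def S_def[symmetric] Y_def[symmetric] Z_def[symmetric]
    by (simp add: endemic_eq_iff)
qed

lemma both_Ei_exist:
  assumes hC: "CI \<le> mu^2 / (mu + r) * (sqrt (beta / (mu * sm) + 1 / ss) - sqrt (1 / ss))^2"
    and R: "(sqrt p + sqrt q)^2 \<le> R" "R < 1 + k"
  shows "Ei_exists (-1) A sm ss mu rho beta r CI \<and> Ei_exists 1 A sm ss mu rho beta r CI"
proof -
  define t where "t = sqrt d"
  have "d \<ge> 0" "0 < (R-p+q - t)/2" "(R-p+q + t)/2 < R - k"
    using roots_below_gap[OF q_pos q_less_one k_pos p_eq_k sqrt_p_add_sqrt_q_le_one[OF hC] R]
    unfolding d_eq t_def by auto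
  moreover have "t \<ge> 0" using \<open>d \<ge> 0\<close> by (simp add: t_def)
  ultimately show ?thesis unfolding Ei_exists_iff t_def[symmetric] by (auto simp: field_simps)
qed

lemma only_smaller_Ei_exists_at_gap:
  assumes hC: "CI \<le> mu^2 / (mu + r) * (sqrt (beta / (mu * sm) + 1 / ss) - sqrt (1 / ss))^2"
    and R: "R = 1 + k"
  shows "Ei_exists (-1) A sm ss mu rho beta r CI \<and> \<not> Ei_exists 1 A sm ss mu rho beta r CI"
proof -
  have kq: "k*q < 1 - q"
    using mult_less_one_minus_if_sqrt_add_le_one[OF q_pos q_less_one k_pos p_eq_k
        sqrt_p_add_sqrt_q_le_one[OF hC]] .
  have "d \<ge> 0" "(R-p+q - sqrt d)/2 = (1+k)*q" "(R-p+q + sqrt d)/2 = R - k"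
    using roots_at_gap[OF kq p_eq_k R] R unfolding d_eq by auto
  moreover have "0 < (1+k)*q" using k_pos q_pos by simp
  moreover have "(1+k)*q < R - k" using kq R by (simp add: algebra_simps)
  ultimately show ?thesis unfolding Ei_exists_iff by simp
qed

lemma unique_endemic_above_gap:
  assumes R: "R > 1 + k"
  shows "Ei_exists (-1) A sm ss mu rho beta r CI \<and>
    endemic_eq A sm ss mu rho beta r CI (Ei (-1) A sm ss mu rho beta r CI) \<and>
    (\<forall>E. endemic_eq A sm ss mu rho beta r CI E \<longrightarrow> E = Ei (-1) A sm ss mu rho beta r CI)"
proof -
  define x1 where "x1 = (R-p+q - sqrt d)/2"
  have roots: "d \<ge> 0" "0 < x1" "x1 < R - k"
    "\<And>x. x^2 - (R-p+q)*x + R*q = 0 \<Longrightarrow> x < R - k \<Longrightarrow> x = x1"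
    using unique_root_below_gap[OF q_pos q_less_one k_pos p_eq_k R] unfolding x1_def d_eq by auto
  have Ei1: "Ei (-1) A sm ss mu rho beta r CI = branch x1" unfolding Ei_eq_branch x1_def by simp
  have "x1^2 - (R-p+q)*x1 + R*q = ((sqrt d)^2 - ((R-p+q)^2 - 4*R*q))/4"
    unfolding x1_def by (simp add: power2_eq_square field_simps)
  also have "\<dots> = 0" using roots(1) unfolding d_eq discr_eq_shifted by simp
  finally have "endemic_eq A sm ss mu rho beta r CI (Ei (-1) A sm ss mu rho beta r CI)"
    unfolding Ei1 by (rule endemic_branch[OF roots(2,3)])
  moreover have "E = branch x1" if E: "endemic_eq A sm ss mu rho beta r CI E" for E
  proof -
    obtain S Y Z where SYZ: "E = (S, Y, Z)" by (cases E)
    then have E': "endemic_eq A sm ss mu rho beta r CI (S, Y, Z)" using E by simp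
    have "Z > CI"
    proof (rule ccontr)
      assume "\<not> Z > CI"
      then have "R \<le> 1 + k" using endemic_below_capacity[OF E'] by simp
      with R show False by simp
    qed
    then obtain x where "x < R - k" "x^2 - (R-p+q)*x + R*q = 0" "(S, Y, Z) = branch x"
      using endemic_above_capacity[OF E'] by blast
    then show ?thesis using roots(4) SYZ by blast
  qed
  moreover have "Ei_exists (-1) A sm ss mu rho beta r CI"
    unfolding Ei_exists_iff using roots(1-3) by (simp add: x1_def)
  ultimately show ?thesis unfolding Ei1 by blast
qed

end

theorem theorem2p3:
  fixes A sm ss mu rho beta r CI :: real
  assumes pos: "A > 0" "sm > 0" "ss > 0" "mu > 0" "rho > 0" "beta > 0" "r > 0" "CI > 0"
    and hR: "R0 A sm mu rho beta r > sm * (mu + r) * CI / (mu * beta)"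
    and hC: "CI \<le> mu^2 / (mu + r) * (sqrt (beta / (mu * sm) + 1 / ss) - sqrt (1 / ss))^2"
  defines "R \<equiv> R0 A sm mu rho beta r"
    and "K \<equiv> 1 + sm * (mu + r) / (mu * beta) * CI"
    and "p \<equiv> pp A sm ss mu rho beta r CI"
    and "q \<equiv> qq A sm ss mu rho beta r CI"
  shows
    "((sqrt p + sqrt q)^2 \<le> R \<and> R \<le> 1 \<longrightarrow>
        \<not> endemic_eq A sm ss mu rho beta r CI (Estar A sm ss mu rho beta r CI) \<and>
        Ei_exists (-1) A sm ss mu rho beta r CI \<and> Ei_exists 1 A sm ss mu rho beta r CI)
     \<and> (1 < R \<and> R < K \<longrightarrow>
        endemic_eq A sm ss mu rho beta r CI (Estar A sm ss mu rho beta r CI) \<and>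
        Ei_exists (-1) A sm ss mu rho beta r CI \<and> Ei_exists 1 A sm ss mu rho beta r CI)
     \<and> (R = K \<longrightarrow>
        endemic_eq A sm ss mu rho beta r CI (Estar A sm ss mu rho beta r CI) \<and>
        Ei_exists (-1) A sm ss mu rho beta r CI \<and> \<not> Ei_exists 1 A sm ss mu rho beta r CI)
     \<and> (R > K \<longrightarrow>
        Ei_exists (-1) A sm ss mu rho beta r CI \<and>
        endemic_eq A sm ss mu rho beta r CI (Ei (-1) A sm ss mu rho beta r CI) \<and>
        (\<forall>E. endemic_eq A sm ss mu rho beta r CI E \<longrightarrow> E = Ei (-1) A sm ss mu rho beta r CI))"
proof -
  interpret mild_severe_model A sm ss mu rho beta r CI
    using pos by unfold_locales
  have K: "K = 1 + k" by (simp add: K_def k_def)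
  note Estar_not_endemic Estar_endemic both_Ei_exist[OF hC] only_smaller_Ei_exists_at_gap[OF hC]
    unique_endemic_above_gap
  note regimes = this[folded R_def p_def q_def, unfolded K[symmetric]]
  have "0 \<le> sqrt p + sqrt q" using p_eq_k k_pos q_pos q_less_one by (simp add: p_def q_def)
  then have "(sqrt p + sqrt q)^2 \<le> 1"
    using sqrt_p_add_sqrt_q_le_one[OF hC] by (simp add: p_def q_def power_le_one)
  moreover have "1 < K" using k_pos K by simp
  ultimately show ?thesis using regimes by auto
qed

end
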